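(* Let $H$ be a connected graph that is isomorphic neither to $K_4$ nor to the diamond. Then any two distinct strong triangles of $H$ are edge-disjoint.
   Context: A triangle $T$ of $H$ is strong if every maximal matching of $H$ contains an edge of $T$. The diamond is the graph with vertices $a,b,c,d$ and edges $ab,ac,bc,bd,cd$. *)

theory Defs
  imports Main
begin

definition simple_graph :: "'a set \<Rightarrow> 'a set set \<Rightarrow> bool" where
  "simple_graph V E \<longleftrightarrow> finite V \<and>
     (\<forall>e\<in>E. \<exists>u v. u \<in> V \<and> v \<in> V \<and> u \<noteq> v \<and> e = {u, v})"

inductive reachable :: "'a set set \<Rightarrow> 'a \<Rightarrow> 'a \<Rightarrow> bool" for E where
  refl: "reachable E u u"
| step: "reachable E u v \<Longrightarrow> {v, w} \<in> E \<Longrightarrow> reachable E u w"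

definition connected_graph :: "'a set \<Rightarrow> 'a set set \<Rightarrow> bool" where
  "connected_graph V E \<longleftrightarrow> simple_graph V E \<and> V \<noteq> {} \<and>
     (\<forall>u\<in>V. \<forall>v\<in>V. reachable E u v)"

definition graph_iso :: "'a set \<Rightarrow> 'a set set \<Rightarrow> 'b set \<Rightarrow> 'b set set \<Rightarrow> bool" where
  "graph_iso V E V' E' \<longleftrightarrow> (\<exists>f. bij_betw f V V' \<and>
     (\<forall>u\<in>V. \<forall>v\<in>V. {u, v} \<in> E \<longleftrightarrow> {f u, f v} \<in> E'))"

definition K4_V :: "nat set" where "K4_V = {0, 1, 2, 3}"
definition K4_E :: "nat set set" where
  "K4_E = {{0,1},{0,2},{0,3},{1,2},{1,3},{2,3}}"

definition diamond_V :: "nat set" where "diamond_V = {0, 1, 2, 3}"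
definition diamond_E :: "nat set set" where
  "diamond_E = {{0,1},{0,2},{1,2},{1,3},{2,3}}"

definition matching :: "'a set set \<Rightarrow> 'a set set \<Rightarrow> bool" where
  "matching E M \<longleftrightarrow> M \<subseteq> E \<and> (\<forall>e\<in>M. \<forall>e'\<in>M. e \<noteq> e' \<longrightarrow> e \<inter> e' = {})"

definition maximal_matching :: "'a set set \<Rightarrow> 'a set set \<Rightarrow> bool" where
  "maximal_matching E M \<longleftrightarrow> matching E M \<and>
     (\<forall>M'. matching E M' \<and> M \<subseteq> M' \<longrightarrow> M' = M)"

definition triangle :: "'a set set \<Rightarrow> 'a set \<Rightarrow> bool" where
  "triangle E T \<longleftrightarrow> (\<exists>a b c. a \<noteq> b \<and> a \<noteq> c \<and> b \<noteq> c \<and> T = {a, b, c} \<and>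
     {a, b} \<in> E \<and> {a, c} \<in> E \<and> {b, c} \<in> E)"

definition tri_edges :: "'a set \<Rightarrow> 'a set set" where
  "tri_edges T = {e. e \<subseteq> T \<and> card e = 2}"

definition strong_triangle :: "'a set set \<Rightarrow> 'a set \<Rightarrow> bool" where
  "strong_triangle E T \<longleftrightarrow> triangle E T \<and>
     (\<forall>M. maximal_matching E M \<longrightarrow> M \<inter> tri_edges T \<noteq> {})"

end

theory Submission imports Defs begin

text \<open>Suppose two distinct strong triangles share the edge uv, say T1 = uvc and T2 = uvd.
  No vertex x outside {u,v,c,d} can be adjacent to this core: an edge wx together with a
  suitable edge among the core vertices would form a matching avoiding T1 (or T2), and a
  maximal matching containing it would miss the triangle. By connectivity the graph has
  exactly the four vertices u, v, c, d, so it is K4 if cd is an edge and the diamond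
  otherwise.\<close>

lemma simple_graph_finite_edges:
  assumes "simple_graph V E"
  shows "finite E"
proof -
  have "E \<subseteq> Pow V" and "finite V" using assms unfolding simple_graph_def by auto
  then show ?thesis by (meson finite_Pow_iff finite_subset)
qed

lemma simple_graph_edgeD:
  assumes "simple_graph V E" "{x, y} \<in> E"
  shows "x \<in> V" "y \<in> V" "x \<noteq> y"
proof -
  obtain u v where "u \<in> V" "v \<in> V" "u \<noteq> v" "{x, y} = {u, v}"
    using assms unfolding simple_graph_def by blast
  then show "x \<in> V" "y \<in> V" "x \<noteq> y" by (auto simp: doubleton_eq_iff)
qed

lemma reachable_closed:
  assumes "reachable E u v" "u \<in> S" "\<And>w x. w \<in> S \<Longrightarrow> {w, x} \<in> E \<Longrightarrow> x \<in> S"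
  shows "v \<in> S"
  using assms by (induction rule: reachable.induct) auto

lemma matching_extends_to_maximal:
  assumes "finite E" "matching E M0"
  obtains M where "maximal_matching E M" "M0 \<subseteq> M"
proof -
  let ?S = "{M. matching E M \<and> M0 \<subseteq> M}"
  have fin: "finite ?S"
    by (rule finite_subset[of _ "Pow E"]) (use assms(1) in \<open>auto simp: matching_def\<close>)
  have ne: "?S \<noteq> {}" using assms(2) by auto
  obtain M where M: "M \<in> ?S" "\<forall>M'\<in>?S. M \<le> M' \<longrightarrow> M = M'"
    using finite_has_maximal[OF fin ne] by blast
  then have "maximal_matching E M" unfolding maximal_matching_def by auto
  with M(1) show ?thesis using that by blast
qed

lemma tri_edges_insert3:
  assumes "a \<noteq> b" "a \<noteq> c" "b \<noteq> c"
  shows "tri_edges {a, b, c} = {{a, b}, {a, c}, {b, c}}"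
proof (rule set_eqI)
  fix e
  show "e \<in> tri_edges {a, b, c} \<longleftrightarrow> e \<in> {{a, b}, {a, c}, {b, c}}"
  proof
    assume "e \<in> tri_edges {a, b, c}"
    then obtain x y where "e = {x, y}" "x \<noteq> y" "x \<in> {a, b, c}" "y \<in> {a, b, c}"
      unfolding tri_edges_def card_2_iff by auto
    then show "e \<in> {{a, b}, {a, c}, {b, c}}" by (auto simp: insert_commute)
  qed (use assms in \<open>auto simp: tri_edges_def\<close>)
qed

text \<open>A maximal matching containing e1 and e2 would have to avoid the triangle.\<close>

lemma strong_triangle_not_dominated:
  assumes "strong_triangle E T" "finite E" "e1 \<in> E" "e2 \<in> E" "e1 \<inter> e2 = {}"
    "\<not> e1 \<subseteq> T" "\<not> e2 \<subseteq> T"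
    "\<forall>f\<in>tri_edges T. f \<inter> e1 \<noteq> {} \<or> f \<inter> e2 \<noteq> {}"
  shows False
proof -
  have "matching E {e1, e2}" using assms(3-5) unfolding matching_def by auto
  then obtain M where M: "maximal_matching E M" "{e1, e2} \<subseteq> M"
    using matching_extends_to_maximal assms(2) by blast
  then obtain f where f: "f \<in> M" "f \<in> tri_edges T"
    using assms(1) unfolding strong_triangle_def by blast
  have "f \<noteq> e1" "f \<noteq> e2" using f(2) assms(6,7) unfolding tri_edges_def by auto
  moreover have "matching E M" using M(1) unfolding maximal_matching_def by simp
  ultimately have "f \<inter> e1 = {}" "f \<inter> e2 = {}"
    using M(2) f(1) unfolding matching_def by auto
  then show False using assms(8) f(2) by blast
qed

lemma triangle_through_edge:
  assumes "triangle E T" "u \<in> T" "v \<in> T" "u \<noteq> v"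
  obtains c where "c \<noteq> u" "c \<noteq> v" "T = {u, v, c}" "{u, v} \<in> E" "{u, c} \<in> E" "{v, c} \<in> E"
proof -
  obtain a b c where h: "a \<noteq> b" "a \<noteq> c" "b \<noteq> c" "T = {a, b, c}"
     "{a, b} \<in> E" "{a, c} \<in> E" "{b, c} \<in> E"
    using assms(1) unfolding triangle_def by blast
  have u: "u = a \<or> u = b \<or> u = c" and v: "v = a \<or> v = b \<or> v = c"
    using h(4) assms(2,3) by auto
  have "\<exists>c. c \<noteq> u \<and> c \<noteq> v \<and> T = {u, v, c} \<and> {u, v} \<in> E \<and> {u, c} \<in> E \<and> {v, c} \<in> E"
  proof (cases "u = a")
    case True
    then show ?thesis using h v assms(4) by (elim disjE) (auto simp: insert_commute)
  next
    case False
    then show ?thesis using h u v assms(4) by (elim disjE) (auto simp: insert_commute)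
  qed
  then show ?thesis using that by blast
qed

lemma distinct_triangles_sharing_edge:
  assumes "triangle E T1" "triangle E T2" "T1 \<noteq> T2"
    and "tri_edges T1 \<inter> tri_edges T2 \<noteq> {}"
  obtains u v c d where "distinct [u, v, c, d]" "T1 = {u, v, c}" "T2 = {u, v, d}"
    "{u, v} \<in> E" "{u, c} \<in> E" "{v, c} \<in> E" "{u, d} \<in> E" "{v, d} \<in> E"
proof -
  obtain u v where uv: "u \<noteq> v" "u \<in> T1" "v \<in> T1" "u \<in> T2" "v \<in> T2"
    using assms(4) unfolding tri_edges_def card_2_iff by auto
  obtain c where c: "c \<noteq> u" "c \<noteq> v" "T1 = {u, v, c}" "{u, v} \<in> E" "{u, c} \<in> E" "{v, c} \<in> E"
    using triangle_through_edge[OF assms(1) uv(2,3,1)] by blast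
  obtain d where d: "d \<noteq> u" "d \<noteq> v" "T2 = {u, v, d}" "{u, d} \<in> E" "{v, d} \<in> E"
    using triangle_through_edge[OF assms(2) uv(4,5,1)] by blast
  have "c \<noteq> d" using c(3) d(3) assms(3) by auto
  then show ?thesis using uv(1) c d by (intro that[of u v c d]) auto
qed

lemma strong_triangles_sharing_edge_span:
  assumes conn: "connected_graph V E" and dist: "distinct [a, b, c, d]"
    and e: "{a, b} \<in> E" "{a, c} \<in> E" "{b, c} \<in> E" "{a, d} \<in> E" "{b, d} \<in> E"
    and s1: "strong_triangle E {a, b, c}" and s2: "strong_triangle E {a, b, d}"
  shows "V = {a, b, c, d}"
proof -
  have sg: "simple_graph V E" using conn unfolding connected_graph_def by auto
  note finE = simple_graph_finite_edges[OF sg]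
  have ne: "a \<noteq> b" "a \<noteq> c" "a \<noteq> d" "b \<noteq> c" "b \<noteq> d" "c \<noteq> d" using dist by auto
  have T1: "tri_edges {a, b, c} = {{a, b}, {a, c}, {b, c}}"
    and T2: "tri_edges {a, b, d} = {{a, b}, {a, d}, {b, d}}"
    using ne by (simp_all add: tri_edges_insert3)
  have closed: "x \<in> {a, b, c, d}" if w: "w \<in> {a, b, c, d}" and wx: "{w, x} \<in> E" for w x
  proof (rule ccontr)
    assume x: "x \<notin> {a, b, c, d}"
    from w consider "w = a" | "w = b" | "w = c" | "w = d" by blast
    then show False
    proof cases
      case 1
      show False by (rule strong_triangle_not_dominated[OF s1 finE, of "{a, x}" "{b, d}"])
        (use 1 wx x ne e T1 in auto)
    next
      case 2
      show False by (rule strong_triangle_not_dominated[OF s1 finE, of "{b, x}" "{a, d}"])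
        (use 2 wx x ne e T1 in auto)
    next
      case 3
      show False by (rule strong_triangle_not_dominated[OF s1 finE, of "{c, x}" "{a, d}"])
        (use 3 wx x ne e T1 in auto)
    next
      case 4
      show False by (rule strong_triangle_not_dominated[OF s2 finE, of "{d, x}" "{a, c}"])
        (use 4 wx x ne e T2 in auto)
    qed
  qed
  have V: "a \<in> V" "b \<in> V" "c \<in> V" "d \<in> V"
    using simple_graph_edgeD[OF sg e(1)] simple_graph_edgeD[OF sg e(2)]
      simple_graph_edgeD[OF sg e(4)] by auto
  have "v \<in> {a, b, c, d}" if "v \<in> V" for v
  proof (rule reachable_closed[OF _ _ closed])
    show "reachable E a v" using conn V(1) that unfolding connected_graph_def by blast
  qed simp
  with V show ?thesis by blast
qed

lemma graph_iso_four_vertices: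
  fixes f :: "'a \<Rightarrow> nat"
  assumes sg: "simple_graph V E" and V: "V = {a, b, c, d}" and dist: "distinct [a, b, c, d]"
    and f: "f a = pa" "f b = pb" "f c = pc" "f d = pd"
    and fd: "distinct [pa, pb, pc, pd]"
    and W: "W = {pa, pb, pc, pd}"
    and loops: "\<forall>x. {x} \<notin> F"
    and adj: "{a, b} \<in> E \<longleftrightarrow> {pa, pb} \<in> F" "{a, c} \<in> E \<longleftrightarrow> {pa, pc} \<in> F"
      "{a, d} \<in> E \<longleftrightarrow> {pa, pd} \<in> F" "{b, c} \<in> E \<longleftrightarrow> {pb, pc} \<in> F"
      "{b, d} \<in> E \<longleftrightarrow> {pb, pd} \<in> F" "{c, d} \<in> E \<longleftrightarrow> {pc, pd} \<in> F"
  shows "graph_iso V E W F"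
  unfolding graph_iso_def
proof (intro exI conjI)
  show "bij_betw f V W" unfolding bij_betw_def inj_on_def V W using dist f fd by auto
  have "{x} \<notin> E" for x using simple_graph_edgeD(3)[OF sg, of x x] by auto
  then show "\<forall>u\<in>V. \<forall>v\<in>V. ({u, v} \<in> E) = ({f u, f v} \<in> F)"
    using V f loops adj by (auto simp: insert_commute)
qed

lemma graph_iso_K4:
  assumes sg: "simple_graph V E" and V: "V = {a, b, c, d}" and dist: "distinct [a, b, c, d]"
    and e: "{a, b} \<in> E" "{a, c} \<in> E" "{b, c} \<in> E" "{a, d} \<in> E" "{b, d} \<in> E" "{c, d} \<in> E"
  shows "graph_iso V E K4_V K4_E"
proof -
  define f where "f x = (if x = a then 0 else if x = b then 1 else if x = c then 2 else (3::nat))" for x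
  show ?thesis
    by (rule graph_iso_four_vertices[OF sg V dist, of f 0 1 2 3])
      (use dist e in \<open>auto simp: f_def K4_V_def K4_E_def doubleton_eq_iff\<close>)
qed

text \<open>The shared edge ab becomes the diamond's diagonal 1-2 and the non-edge cd its non-edge 0-3.\<close>

lemma graph_iso_diamond:
  assumes sg: "simple_graph V E" and V: "V = {a, b, c, d}" and dist: "distinct [a, b, c, d]"
    and e: "{a, b} \<in> E" "{a, c} \<in> E" "{b, c} \<in> E" "{a, d} \<in> E" "{b, d} \<in> E" "{c, d} \<notin> E"
  shows "graph_iso V E diamond_V diamond_E"
proof -
  define f where "f x = (if x = a then 1 else if x = b then 2 else if x = c then 0 else (3::nat))" for x
  show ?thesis
    by (rule graph_iso_four_vertices[OF sg V dist, of f 1 2 0 3])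
      (use dist e in \<open>auto simp: f_def diamond_V_def diamond_E_def doubleton_eq_iff\<close>)
qed

theorem mainTheorem16:
  fixes V :: "'a set" and E :: "'a set set"
  assumes "connected_graph V E"
    and "\<not> graph_iso V E K4_V K4_E"
    and "\<not> graph_iso V E diamond_V diamond_E"
    and "strong_triangle E T1" and "strong_triangle E T2"
    and "T1 \<noteq> T2"
  shows "tri_edges T1 \<inter> tri_edges T2 = {}"
proof (rule ccontr)
  assume "tri_edges T1 \<inter> tri_edges T2 \<noteq> {}"
  moreover have "triangle E T1" "triangle E T2"
    using assms(4,5) unfolding strong_triangle_def by auto
  ultimately obtain u v c d where dist: "distinct [u, v, c, d]"
    and T: "T1 = {u, v, c}" "T2 = {u, v, d}"
    and e: "{u, v} \<in> E" "{u, c} \<in> E" "{v, c} \<in> E" "{u, d} \<in> E" "{v, d} \<in> E"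
    using distinct_triangles_sharing_edge assms(6) by metis
  have sg: "simple_graph V E" using assms(1) unfolding connected_graph_def by auto
  have V: "V = {u, v, c, d}"
    using strong_triangles_sharing_edge_span[OF assms(1) dist e] assms(4,5) T by simp
  show False
  proof (cases "{c, d} \<in> E")
    case True
    then show False using graph_iso_K4[OF sg V dist e] assms(2) by blast
  next
    case False
    then show False using graph_iso_diamond[OF sg V dist e] assms(3) by blast
  qed
qed

end
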